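(* For every integer $n\ge 3$, let $\beta_1,\dots,\beta_n$ be the eigenvalues of $L_S$ (all positive). Then $$\sum_{i=1}^{n}\frac{1}{\beta_{i}}=\frac{n}{2\sqrt{3}}\cdot\frac{p^{n}-q^{n}}{p^{n}+q^{n}+2}.$$
   Context: $p=2+\sqrt3$, $q=2-\sqrt3$. $L_S$ denotes the $n\times n$ matrix with all diagonal entries equal to $4$, entries $(i,i+1)$ and $(i+1,i)$ equal to $-1$ for $1\le i\le n-1$, entries $(1,n)$ and $(n,1)$ equal to $+1$, and all other entries $0$. *)

theory Defs
  imports "Jordan_Normal_Form.Char_Poly" "HOL-Computational_Algebra.Polynomial"
begin

definition p_const :: real where "p_const = 2 + sqrt 3"
definition q_const :: real where "q_const = 2 - sqrt 3"

text \<open>The n x n matrix L_S, indices 0..n-1 (shifted from 1..n).\<close>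
definition L_S :: "nat \<Rightarrow> real mat" where
  "L_S n = mat n n (\<lambda>(i, j).
     if i = j then 4
     else if j = i + 1 \<or> i = j + 1 then -1
     else if (i = 0 \<and> j = n - 1) \<or> (i = n - 1 \<and> j = 0) then 1
     else 0)"

definition eigenvalues_mset :: "real mat \<Rightarrow> real multiset" where
  "eigenvalues_mset A = proots (char_poly A)"

end

theory Submission
  imports Defs "Jordan_Normal_Form.Schur_Decomposition"
begin

text \<open>
  Write \<open>L_S = 4 I - S - S\<^sup>T\<close> for the negacyclic shift \<open>S\<close>
  (\<open>S e_i = e_(i+1)\<close> for \<open>i < n - 1\<close>, \<open>S e_(n-1) = - e_0\<close>). Its inverse is the Toeplitz
  matrix \<open>(h (j - i))\<close> for any \<open>h :: int \<Rightarrow> real\<close> with \<open>4 h d - h (d - 1) - h (d + 1) = [d = 0]\<close>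
  and \<open>h (d - n) = - h d\<close>. Since \<open>p\<close> and \<open>q\<close> are the roots of \<open>x\<^sup>2 = 4 x - 1\<close>, such an \<open>h\<close>
  is a combination of \<open>p ^ |d|\<close> and \<open>q ^ |d|\<close>, and the trace \<open>n h 0\<close> of the inverse
  simplifies, using \<open>p q = 1\<close>, to the right-hand side.

  On the other hand \<open>L_S\<close> is real symmetric, so its characteristic polynomial splits over the
  reals, and a Schur triangularisation \<open>L_S = P B Q\<close> with the eigenvalues on the diagonal of
  \<open>B\<close> gives \<open>\<Sum> 1 / \<beta> = tr B\<^sup>-\<^sup>1 = tr L_S\<^sup>-\<^sup>1\<close>.
\<close>

lemma proots_prod_linear: "proots (\<Prod>a\<leftarrow>as. [:- a, 1:]) = mset (as :: 'a :: idom list)"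
proof (induction as)
  case (Cons a as)
  have "(\<Prod>a\<leftarrow>as. [:- a, 1:]) \<noteq> 0"
    by (auto simp: prod_list_zero_iff)
  then have "proots ([:- a, 1:] * (\<Prod>a\<leftarrow>as. [:- a, 1:]))
      = proots [:- a, 1:] + proots (\<Prod>a\<leftarrow>as. [:- a, 1:])"
    by (intro proots_mult) auto
  then show ?case
    using Cons.IH by simp
qed simp

definition mat_trace :: "'a :: comm_ring mat \<Rightarrow> 'a" where
  "mat_trace A = (\<Sum>i<dim_row A. A $$ (i, i))"

lemma mat_trace_mult_comm:
  assumes "A \<in> carrier_mat n m" and "B \<in> carrier_mat m n"
  shows "mat_trace (A * B) = mat_trace (B * A)"
proof -
  have "mat_trace (A * B) = (\<Sum>i<n. \<Sum>k<m. A $$ (i, k) * B $$ (k, i))"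
    using assms by (simp add: mat_trace_def scalar_prod_def atLeast0LessThan)
  also have "\<dots> = (\<Sum>k<m. \<Sum>i<n. B $$ (k, i) * A $$ (i, k))"
    by (subst sum.swap) (simp add: mult.commute)
  also have "\<dots> = mat_trace (B * A)"
    using assms by (simp add: mat_trace_def scalar_prod_def atLeast0LessThan)
  finally show ?thesis .
qed

lemma mult_mat_upper_triangular_index:
  fixes X B :: "'a :: comm_ring mat"
  assumes X: "X \<in> carrier_mat n n" and B: "B \<in> carrier_mat n n" "upper_triangular B"
    and ij: "i < n" "j < n" and X_zero: "\<And>k. k < j \<Longrightarrow> X $$ (i, k) = 0"
  shows "(X * B) $$ (i, j) = X $$ (i, j) * B $$ (j, j)"
proof -
  have "(X * B) $$ (i, j) = (\<Sum>k<n. X $$ (i, k) * B $$ (k, j))"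
    using X B ij by (simp add: scalar_prod_def atLeast0LessThan)
  also have "\<dots> = (\<Sum>k<n. if k = j then X $$ (i, j) * B $$ (j, j) else 0)"
    using X_zero B ij by (intro sum.cong) (auto simp: upper_triangular_def linorder_neq_iff)
  also have "\<dots> = X $$ (i, j) * B $$ (j, j)"
    using ij by simp
  finally show ?thesis .
qed

lemma left_inverse_upper_triangular:
  fixes X B :: "'a :: field mat"
  assumes X: "X \<in> carrier_mat n n" and B: "B \<in> carrier_mat n n" "upper_triangular B"
    and XB: "X * B = 1\<^sub>m n"
  shows "upper_triangular X" and "\<And>i. i < n \<Longrightarrow> X $$ (i, i) = 1 / B $$ (i, i)"
proof -
  have "det X * det B = 1"
    using det_mult[OF X B(1)] XB by simp
  then have "det B \<noteq> 0"
    by auto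
  then have "prod_list (diag_mat B) \<noteq> 0"
    using det_upper_triangular[OF B(2,1)] by simp
  then have diag_B: "B $$ (j, j) \<noteq> 0" if "j < n" for j
    using that B by (auto simp: prod_list_zero_iff diag_mat_def)
  have lower_zero: "\<forall>i. j < i \<longrightarrow> i < n \<longrightarrow> X $$ (i, j) = 0" for j
  proof (induction j rule: less_induct)
    case (less j)
    show ?case
    proof (intro allI impI)
      fix i assume "j < i" "i < n"
      then have "X $$ (i, j) * B $$ (j, j) = (X * B) $$ (i, j)"
        using less.IH by (intro mult_mat_upper_triangular_index[OF X B, symmetric]) auto
      also have "\<dots> = 0"
        using XB \<open>j < i\<close> \<open>i < n\<close> by simp
      finally show "X $$ (i, j) = 0"
        using diag_B \<open>j < i\<close> \<open>i < n\<close> by simp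
    qed
  qed
  then show "upper_triangular X"
    using X by (auto simp: upper_triangular_def)
  fix i assume "i < n"
  then have "X $$ (i, i) * B $$ (i, i) = (X * B) $$ (i, i)"
    using lower_zero by (intro mult_mat_upper_triangular_index[OF X B, symmetric]) auto
  also have "\<dots> = 1"
    using XB \<open>i < n\<close> by simp
  finally show "X $$ (i, i) = 1 / B $$ (i, i)"
    using diag_B \<open>i < n\<close> by (simp add: eq_divide_eq)
qed

lemma sum_inverse_roots_char_poly:
  fixes A M :: "'a :: conjugatable_ordered_field mat"
  assumes A: "A \<in> carrier_mat n n" and M: "M \<in> carrier_mat n n" and AM: "A * M = 1\<^sub>m n"
    and char_poly: "char_poly A = (\<Prod>a\<leftarrow>as. [:- a, 1:])"
  shows "(\<Sum>a\<in>#mset as. 1 / a) = mat_trace M"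
proof -
  obtain B P Q where schur: "schur_decomposition A as = (B, P, Q)"
    by (cases "schur_decomposition A as") auto
  from schur_decomposition[OF A char_poly schur]
  have wit: "similar_mat_wit A B P Q" and B_ut: "upper_triangular B" and diag: "diag_mat B = as"
    by auto
  note W = similar_mat_witD2[OF A wit]
  have MA: "M * A = 1\<^sub>m n"
    by (rule mat_mult_left_right_inverse[OF A M AM])
  define X where "X = Q * M * P"
  have X: "X \<in> carrier_mat n n"
    unfolding X_def using W M by simp
  have "X * B = Q * M * (P * Q) * A * P"
    unfolding X_def using W M by (simp add: assoc_mult_mat[of _ n n _ n _ n])
  also have "\<dots> = Q * (M * A) * P"
    using W M A by (simp add: assoc_mult_mat[of _ n n _ n _ n])
  also have "\<dots> = 1\<^sub>m n"
    using W MA by simp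
  finally have XB: "X * B = 1\<^sub>m n" .
  have "(\<Sum>a\<in>#mset as. 1 / a) = (\<Sum>i<n. 1 / B $$ (i, i))"
    using W(5) unfolding diag[symmetric]
    by (simp add: diag_mat_def sum_mset_sum_list o_def atLeast0LessThan
        flip: mset_map sum_set_upt_conv_sum_list_nat)
  also have "\<dots> = mat_trace X"
    using left_inverse_upper_triangular(2)[OF X W(5) B_ut XB] X
    by (auto simp: mat_trace_def intro!: sum.cong)
  also have "\<dots> = mat_trace (P * (Q * M))"
    unfolding X_def using W M by (intro mat_trace_mult_comm) auto
  also have "\<dots> = mat_trace M"
    using W M by (simp flip: assoc_mult_mat[of P n n Q n M n])
  finally show ?thesis .
qed

interpretation of_real_poly_hom: map_poly_inj_idom_hom "of_real :: real \<Rightarrow> complex" ..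

lemma conjugate_of_real_mult_mat_vec:
  fixes A :: "real mat" and v :: "complex vec"
  assumes "A \<in> carrier_mat m n" and "v \<in> carrier_vec n"
  shows "conjugate (map_mat of_real A *\<^sub>v v) = map_mat of_real A *\<^sub>v conjugate v"
  using assms by (auto simp: scalar_prod_def cnj_sum intro!: eq_vecI sum.cong)

lemma eigenvalue_of_real_symmetric_real:
  fixes A :: "real mat" and a :: complex
  assumes A: "A \<in> carrier_mat n n" and sym: "transpose_mat A = A"
    and ev: "eigenvalue (map_mat of_real A) a"
  shows "a \<in> \<real>"
proof -
  let ?C = "map_mat complex_of_real A"
  have C: "?C \<in> carrier_mat n n"
    using A by simp
  have C_sym: "transpose_mat ?C = ?C"
    using map_mat_transpose[of of_real A] sym by simp
  obtain v where v: "v \<in> carrier_vec n" "v \<noteq> 0\<^sub>v n" and Cv: "?C *\<^sub>v v = a \<cdot>\<^sub>v v"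
    using ev C unfolding eigenvalue_def eigenvector_def by auto
  have "a * (v \<bullet>c v) = (?C *\<^sub>v v) \<bullet> conjugate v"
    using v by (simp add: Cv)
  also have "\<dots> = v \<bullet> (?C *\<^sub>v conjugate v)"
    using transpose_vec_mult_scalar[OF C, of "conjugate v" v] v C_sym by simp
  also have "\<dots> = cnj a * (v \<bullet>c v)"
    using v A by (simp flip: conjugate_of_real_mult_mat_vec add: Cv conjugate_smult_vec)
  finally have "a = cnj a"
    using v by simp
  then show ?thesis
    by (simp add: Reals_cnj_iff)
qed

lemma char_poly_real_symmetric_splits:
  fixes A :: "real mat"
  assumes A: "A \<in> carrier_mat n n" and sym: "transpose_mat A = A"
  obtains as where "char_poly A = (\<Prod>a\<leftarrow>as. [:- a, 1:])"
proof -
  let ?C = "map_mat complex_of_real A"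
  have C: "?C \<in> carrier_mat n n"
    using A by simp
  obtain cs where cs: "char_poly ?C = (\<Prod>c\<leftarrow>cs. [:- c, 1:])"
    using char_poly_factorized[OF C] by blast
  have "c \<in> \<real>" if "c \<in> set cs" for c
  proof -
    have "poly (char_poly ?C) c = 0"
      unfolding cs using that by (rule linear_poly_root)
    then show ?thesis
      using eigenvalue_of_real_symmetric_real[OF A sym] eigenvalue_root_char_poly[OF C] by blast
  qed
  then have cs_real: "cs = map of_real (map Re cs)"
    by (induction cs) auto
  have "map_poly of_real (char_poly A) = char_poly ?C"
    by (rule of_real_hom.char_poly_hom[OF A, symmetric])
  also have "\<dots> = (\<Prod>a\<leftarrow>map Re cs. [:- of_real a, 1:])"
    unfolding cs by (subst cs_real) (simp add: o_def)
  also have "\<dots> = map_poly of_real (\<Prod>a\<leftarrow>map Re cs. [:- a, 1:])"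
    by (simp add: of_real_poly_hom.hom_prod_list o_def)
  finally show ?thesis
    using that of_real_poly_hom.injectivity by blast
qed

lemma p_q_mult: "p_const * q_const = 1"
  by (simp add: p_const_def q_const_def algebra_simps)

lemma q_pos: "0 < q_const"
proof -
  have "sqrt 3 < 2"
    by (rule real_less_lsqrt) auto
  then show ?thesis
    by (simp add: q_const_def)
qed

lemma p_square: "p_const\<^sup>2 = 4 * p_const - 1" and q_square: "q_const\<^sup>2 = 4 * q_const - 1"
  by (simp_all add: p_const_def q_const_def power2_eq_square algebra_simps)

lemma power_recurrence:
  fixes x :: "'a :: comm_ring_1"
  assumes "x\<^sup>2 = 4 * x - 1"
  shows "4 * x ^ Suc m - x ^ m - x ^ Suc (Suc m) = 0"
proof -
  have "x ^ Suc (Suc m) = x ^ m * x\<^sup>2"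
    by (simp add: power2_eq_square)
  then show ?thesis
    using assms by (simp add: algebra_simps)
qed

text \<open>The coefficient of \<open>p ^ |d|\<close> is chosen so that \<open>h (d - n) = - h d\<close>, and the denominator
  normalises the jump at \<open>0\<close> to \<open>4 h 0 - 2 h 1 = 1\<close>.\<close>

definition L_S_inv_entry :: "nat \<Rightarrow> int \<Rightarrow> real" where
  "L_S_inv_entry n d =
     (q_const ^ nat \<bar>d\<bar> - q_const ^ n * p_const ^ nat \<bar>d\<bar>) / (2 * sqrt 3 * (1 + q_const ^ n))"

lemma L_S_inv_entry_uminus [simp]: "L_S_inv_entry n (- d) = L_S_inv_entry n d"
  by (simp add: L_S_inv_entry_def)

lemma L_S_inv_entry_second_difference:
  "4 * L_S_inv_entry n d - L_S_inv_entry n (d - 1) - L_S_inv_entry n (d + 1) = (if d = 0 then 1 else 0)"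
proof -
  define D where "D = 2 * sqrt 3 * (1 + q_const ^ n)"
  have "D > 0"
    using q_pos by (simp add: D_def add_pos_nonneg)
  have pos: "4 * L_S_inv_entry n e - L_S_inv_entry n (e - 1) - L_S_inv_entry n (e + 1) = 0"
    if "e > 0" for e
  proof -
    let ?N = "\<lambda>k. q_const ^ k - q_const ^ n * p_const ^ k"
    define m where "m = nat (e - 1)"
    have "nat \<bar>e\<bar> = Suc m" "nat \<bar>e - 1\<bar> = m" "nat \<bar>e + 1\<bar> = Suc (Suc m)"
      using that by (simp_all add: m_def)
    then have "4 * L_S_inv_entry n e - L_S_inv_entry n (e - 1) - L_S_inv_entry n (e + 1)
        = (4 * ?N (Suc m) - ?N m - ?N (Suc (Suc m))) / D"
      by (simp add: L_S_inv_entry_def D_def diff_divide_distrib)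
    also have "4 * ?N (Suc m) - ?N m - ?N (Suc (Suc m))
        = (4 * q_const ^ Suc m - q_const ^ m - q_const ^ Suc (Suc m))
          - q_const ^ n * (4 * p_const ^ Suc m - p_const ^ m - p_const ^ Suc (Suc m))"
      by (simp add: algebra_simps)
    finally show ?thesis
      using power_recurrence[OF p_square, of m] power_recurrence[OF q_square, of m] by simp
  qed
  have zero: "4 * L_S_inv_entry n 0 - 2 * L_S_inv_entry n 1 = 1"
  proof -
    have "4 * L_S_inv_entry n 0 - 2 * L_S_inv_entry n 1
        = (4 * (1 - q_const ^ n) - 2 * (q_const - q_const ^ n * p_const)) / D"
      by (simp add: L_S_inv_entry_def D_def diff_divide_distrib)
    also have "4 * (1 - q_const ^ n) - 2 * (q_const - q_const ^ n * p_const) = D"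
      by (simp add: D_def p_const_def q_const_def algebra_simps)
    finally show ?thesis
      using \<open>D > 0\<close> by simp
  qed
  consider "d = 0" | "d > 0" | "d < 0"
    by linarith
  then show ?thesis
  proof cases
    case 1
    then show ?thesis
      using zero L_S_inv_entry_uminus[of n 1] by simp
  next
    case 2
    then show ?thesis
      using pos by simp
  next
    case 3
    have "L_S_inv_entry n (- d - 1) = L_S_inv_entry n (d + 1)"
      "L_S_inv_entry n (- d + 1) = L_S_inv_entry n (d - 1)"
      using L_S_inv_entry_uminus[of n "d + 1"] L_S_inv_entry_uminus[of n "d - 1"] by simp_all
    then show ?thesis
      using pos[of "- d"] 3 by simp
  qed
qed

lemma L_S_inv_entry_antiperiodic:
  assumes "0 \<le> d" and "d \<le> int n"
  shows "L_S_inv_entry n (d - int n) = - L_S_inv_entry n d"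
proof -
  define k where "k = nat d"
  have k: "k \<le> n" "nat \<bar>d\<bar> = k" "nat \<bar>d - int n\<bar> = n - k"
    using assms by (auto simp: k_def)
  have pq_power: "p_const ^ j * q_const ^ j = 1" for j
    by (simp add: p_q_mult flip: power_mult_distrib)
  have q_power_n: "q_const ^ n = q_const ^ (n - k) * q_const ^ k"
    using k(1) by (simp flip: power_add)
  have "q_const ^ n * p_const ^ k = q_const ^ (n - k) * (p_const ^ k * q_const ^ k)"
    unfolding q_power_n by (simp only: ac_simps)
  then have shift_k: "q_const ^ n * p_const ^ k = q_const ^ (n - k)"
    by (simp only: pq_power mult_1_right)
  have "q_const ^ n * p_const ^ (n - k) = q_const ^ k * (p_const ^ (n - k) * q_const ^ (n - k))"
    unfolding q_power_n by (simp only: ac_simps)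
  then have shift_n_k: "q_const ^ n * p_const ^ (n - k) = q_const ^ k"
    by (simp only: pq_power mult_1_right)
  show ?thesis
    using k by (simp add: L_S_inv_entry_def shift_n_k flip: shift_k) (simp add: minus_divide_left)
qed

lemma L_S_index:
  assumes "3 \<le> n" and "i < n" and "k < n"
  shows "L_S n $$ (i, k) =
    (if k = i then 4 else 0)
    + (if i + 1 < n then if k = i + 1 then -1 else 0 else if k = 0 then 1 else 0)
    + (if 0 < i then if k = i - 1 then -1 else 0 else if k = n - 1 then 1 else 0)"
  using assms by (auto simp: L_S_def)

lemma L_S_row_sum:
  fixes f :: "nat \<Rightarrow> real"
  assumes "3 \<le> n" and "i < n"
  shows "(\<Sum>k<n. L_S n $$ (i, k) * f k) =
    4 * f i - (if i + 1 < n then f (i + 1) else - f 0) - (if 0 < i then f (i - 1) else - f (n - 1))"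
  using assms by (simp add: L_S_index distrib_right sum.distrib if_distrib[of "\<lambda>x. x * f _"]
      sum.delta' cong: if_cong)

definition L_S_inv :: "nat \<Rightarrow> real mat" where
  "L_S_inv n = mat n n (\<lambda>(i, j). L_S_inv_entry n (int j - int i))"

lemma L_S_mult_inv:
  assumes n: "3 \<le> n"
  shows "L_S n * L_S_inv n = 1\<^sub>m n"
proof (rule eq_matI)
  fix i j assume "i < dim_row (1\<^sub>m n :: real mat)" and "j < dim_col (1\<^sub>m n :: real mat)"
  then have i: "i < n" and j: "j < n"
    by simp_all
  let ?h = "L_S_inv_entry n"
  have next_entry: "(if i + 1 < n then ?h (int j - int (i + 1)) else - ?h (int j - int 0))
      = ?h (int j - int i - 1)"
  proof (cases "i + 1 < n")
    case False
    then have "int j - int i - 1 = int j - int n"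
      using i by linarith
    show ?thesis
      unfolding \<open>int j - int i - 1 = int j - int n\<close>
      using False L_S_inv_entry_antiperiodic[of "int j" n] j by simp
  qed (simp add: algebra_simps)
  have prev_entry: "(if 0 < i then ?h (int j - int (i - 1)) else - ?h (int j - int (n - 1)))
      = ?h (int j - int i + 1)"
    using L_S_inv_entry_antiperiodic[of "int j + 1" n] i j n by (auto simp: of_nat_diff algebra_simps)
  have "(L_S n * L_S_inv n) $$ (i, j) = (\<Sum>k<n. L_S n $$ (i, k) * ?h (int j - int k))"
    using i j by (simp add: L_S_def L_S_inv_def scalar_prod_def atLeast0LessThan)
  also have "\<dots> = 4 * ?h (int j - int i) - ?h (int j - int i - 1) - ?h (int j - int i + 1)"
    unfolding L_S_row_sum[OF n i] next_entry prev_entry ..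
  also have "\<dots> = 1\<^sub>m n $$ (i, j)"
    using L_S_inv_entry_second_difference[of n "int j - int i"] i j by auto
  finally show "(L_S n * L_S_inv n) $$ (i, j) = 1\<^sub>m n $$ (i, j)" .
qed (simp_all add: L_S_def L_S_inv_def)

lemma L_S_symmetric: "transpose_mat (L_S n) = L_S n"
  by (rule eq_matI) (auto simp: L_S_def)

lemma mat_trace_L_S_inv: "mat_trace (L_S_inv n) = real n * L_S_inv_entry n 0"
  by (simp add: mat_trace_def L_S_inv_def)

lemma L_S_inv_entry_zero:
  "L_S_inv_entry n 0 = (p_const ^ n - q_const ^ n) / (2 * sqrt 3 * (p_const ^ n + q_const ^ n + 2))"
proof -
  have pq: "p_const ^ n * q_const ^ n = 1"
    by (simp add: p_q_mult flip: power_mult_distrib)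
  have "0 < q_const ^ n"
    using q_pos by simp
  moreover have "0 < p_const ^ n"
    by (simp add: p_const_def add_pos_nonneg)
  moreover have "(1 - q_const ^ n) * (p_const ^ n + q_const ^ n + 2)
      = (p_const ^ n - q_const ^ n) * (1 + q_const ^ n)"
    using pq by (simp add: algebra_simps)
  ultimately show ?thesis
    by (simp add: L_S_inv_entry_def divide_simps)
qed

theorem lemma3p2:
  fixes n :: nat
  assumes "n \<ge> 3"
  shows "(\<Sum>\<beta>\<in>#eigenvalues_mset (L_S n). 1 / \<beta>) =
         real n / (2 * sqrt 3) * (p_const ^ n - q_const ^ n) / (p_const ^ n + q_const ^ n + 2)"
proof -
  have L_S: "L_S n \<in> carrier_mat n n" and L_S_inv: "L_S_inv n \<in> carrier_mat n n"
    by (simp_all add: L_S_def L_S_inv_def)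
  obtain \<beta>s where char_poly: "char_poly (L_S n) = (\<Prod>\<beta>\<leftarrow>\<beta>s. [:- \<beta>, 1:])"
    using char_poly_real_symmetric_splits[OF L_S L_S_symmetric] .
  have "(\<Sum>\<beta>\<in>#eigenvalues_mset (L_S n). 1 / \<beta>) = (\<Sum>\<beta>\<in>#mset \<beta>s. 1 / \<beta>)"
    by (simp add: eigenvalues_mset_def char_poly proots_prod_linear)
  also have "\<dots> = mat_trace (L_S_inv n)"
    by (rule sum_inverse_roots_char_poly[OF L_S L_S_inv L_S_mult_inv[OF assms] char_poly])
  also have "\<dots> = real n / (2 * sqrt 3) * (p_const ^ n - q_const ^ n) / (p_const ^ n + q_const ^ n + 2)"
    by (simp add: mat_trace_L_S_inv L_S_inv_entry_zero)
  finally show ?thesis .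
qed

end
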